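(* Assume $u_i=1$ for all $i$, $q_1\ge\dots\ge q_n$, and no pool size bound ($G=n$). If $T$ is the regime returned by var-Greedy, then $$\max_{T'\in\tilde{\mathcal T}^B}u(T')\le e\cdot u(T).$$
   Context: Individual $i\in[n]$ is healthy with probability $q_i\in[0,1]$, independently. For $S\subseteq[n]$, $q_S=\prod_{i\in S}q_i$ ($q_\emptyset=1$). A test is a set $t\subseteq[n]$; with unit utilities $u(t)=q_t|t|$. $\tilde{\mathcal T}^B$ is the set of tuples of $B$ pairwise disjoint tests, with welfare $u(T)=\sum_ju(t_j)$. var-Greedy: for $j=1,\dots,B$, start with $t_j=\emptyset$ and repeatedly consider the smallest-index individual $i$ not yet placed in any test; add $i$ to $t_j$ if $u(t_j\cup\{i\})\ge u(t_j)$ (equivalently $q_i\ge |t_j|/(|t_j|+1)$), otherwise close $t_j$ and move to test $j+1$ (also stop if no individuals remain). *)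

theory Defs
  imports Complex_Main
begin

text \<open>Individuals are 1..n, health probabilities q :: nat => real.
  Unit utilities: u(t) = q_t * |t| with q_t = product of q_i over t.\<close>

definition qprod :: "(nat \<Rightarrow> real) \<Rightarrow> nat set \<Rightarrow> real" where
  "qprod q S = (\<Prod>i\<in>S. q i)"

definition util :: "(nat \<Rightarrow> real) \<Rightarrow> nat set \<Rightarrow> real" where
  "util q t = qprod q t * real (card t)"

definition welfare :: "(nat \<Rightarrow> real) \<Rightarrow> nat set list \<Rightarrow> real" where
  "welfare q T = sum_list (map (util q) T)"

definition regimes :: "nat \<Rightarrow> nat \<Rightarrow> nat set list set" where
  "regimes n B = {T. length T = B \<and> (\<forall>j<B. T ! j \<subseteq> {1..n}) \<and>
      (\<forall>j<B. \<forall>k<B. j \<noteq> k \<longrightarrow> T ! j \<inter> T ! k = {})}"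

function grow_test :: "(nat \<Rightarrow> real) \<Rightarrow> nat \<Rightarrow> nat \<Rightarrow> nat set \<Rightarrow> nat set \<times> nat" where
  "grow_test q n i t =
     (if n < i then (t, i)
      else if util q (insert i t) \<ge> util q t then grow_test q n (Suc i) (insert i t)
      else (t, i))"
  by pat_completeness auto
termination by (relation "measure (\<lambda>(q, n, i, t). Suc n - i)") auto

fun greedy_from :: "(nat \<Rightarrow> real) \<Rightarrow> nat \<Rightarrow> nat \<Rightarrow> nat \<Rightarrow> nat set list" where
  "greedy_from q n 0 i = []"
| "greedy_from q n (Suc B) i =
     (let (t, i') = grow_test q n i {} in t # greedy_from q n B i')"

definition var_greedy :: "(nat \<Rightarrow> real) \<Rightarrow> nat \<Rightarrow> nat \<Rightarrow> nat set list" where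
  "var_greedy q n B = greedy_from q n B 1"

end

(* Dual fitting for the LP relaxation of choosing B disjoint tests.  By AM-GM a test s of
   size k has utility at most sum_{x in s} q_x^k, so prices alpha_x >= 0 and beta >= 0 with
   q_x^m - beta/m <= alpha_x for all m bound the utility of every test by
   sum_{x in s} alpha_x + beta, and the welfare of every regime by sum_x alpha_x + B beta.
   Take beta = max_k k q_F^k, where F is the first individual left out by var-Greedy; then
   the individuals from F on need no price.  In a greedy block of size K with smallest
   probability z, the last admission gives z >= (K-1)/K, hence e z^(K-1) >= 1 because
   (1 + 1/(K-1))^(K-1) <= e, and the rejection of the next individual gives beta <= K z^K.
   Interpolating between alpha = q on the block (enough when beta = 0) and a linear function
   of q (enough when beta = K z^K) prices the block plus one copy of beta at no more than
   e times the utility of the block. *)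

theory Submission
  imports Defs "HOL-Analysis.Convex"
begin

lemma card_mult_prod_le_sum_power:
  fixes x :: "'a \<Rightarrow> real"
  assumes "finite S" "S \<noteq> {}" "\<And>i. i \<in> S \<Longrightarrow> 0 \<le> x i"
  shows "real (card S) * (\<Prod>i\<in>S. x i) \<le> (\<Sum>i\<in>S. x i ^ card S)"
proof -
  let ?k = "card S"
  have k: "?k > 0" using assms by (simp add: card_gt_0_iff)
  have "(\<Prod>i\<in>S. x i) = ((\<Prod>i\<in>S. x i) ^ ?k) powr (1 / ?k)"
  proof (cases "(\<Prod>i\<in>S. x i) = 0")
    case False
    then have "(\<Prod>i\<in>S. x i) > 0" using assms(3) by (simp add: prod_nonneg order_less_le)
    then show ?thesis using k by (simp add: powr_realpow [symmetric] powr_powr)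
  qed (use k in simp)
  also have "\<dots> = (\<Prod>i\<in>S. x i ^ ?k) powr (1 / ?k)" by (simp add: prod_power_distrib)
  also have "\<dots> \<le> (\<Sum>i\<in>S. x i ^ ?k / ?k)"
    by (rule arith_geom_mean) (use assms in auto)
  finally have "(\<Prod>i\<in>S. x i) \<le> (\<Sum>i\<in>S. x i ^ ?k) / ?k" by (simp add: sum_divide_distrib)
  then show ?thesis using k by (simp add: field_simps)
qed

(* The constraints of the LP dual, strengthened via AM-GM to constraints on single
   individuals (see util_le_dual); beta is the price of the budget of B tests. *)
definition dual_feasible :: "(nat \<Rightarrow> real) \<Rightarrow> nat \<Rightarrow> real \<Rightarrow> (nat \<Rightarrow> real) \<Rightarrow> nat set \<Rightarrow> bool" where
  "dual_feasible q n \<beta> \<alpha> S \<longleftrightarrow>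
     (\<forall>x\<in>S. 0 \<le> \<alpha> x \<and> (\<forall>m\<in>{1..n}. q x ^ m - \<beta> / real m \<le> \<alpha> x))"

lemma util_le_dual:
  assumes "dual_feasible q n \<beta> \<alpha> s" "0 \<le> \<beta>" "s \<subseteq> {1..n}"
    and "\<And>x. x \<in> s \<Longrightarrow> 0 \<le> q x"
  shows "util q s \<le> (\<Sum>x\<in>s. \<alpha> x) + \<beta>"
proof (cases "s = {}")
  case False
  have "finite s" using assms finite_subset by blast
  let ?k = "card s"
  have k: "1 \<le> ?k" "?k \<le> n"
    using \<open>finite s\<close> False card_mono [OF _ assms(3)] by (auto simp: Suc_le_eq card_gt_0_iff)
  have "util q s = real ?k * (\<Prod>x\<in>s. q x)" by (simp add: util_def qprod_def)
  also have "\<dots> \<le> (\<Sum>x\<in>s. q x ^ ?k)"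
    using \<open>finite s\<close> False assms(4) by (rule card_mult_prod_le_sum_power)
  also have "\<dots> = (\<Sum>x\<in>s. q x ^ ?k - \<beta> / real ?k) + \<beta>"
    using k by (simp add: sum_subtractf)
  also have "\<dots> \<le> (\<Sum>x\<in>s. \<alpha> x) + \<beta>"
    using assms k unfolding dual_feasible_def by (intro add_mono sum_mono) auto
  finally show ?thesis .
qed (use assms in \<open>simp add: util_def\<close>)

lemma welfare_le_dual:
  assumes "\<forall>i\<in>{1..n}. 0 \<le> q i \<and> q i \<le> 1"
    and "dual_feasible q n \<beta> \<alpha> {1..n}" "0 \<le> \<beta>" "T \<in> regimes n B"
  shows "welfare q T \<le> (\<Sum>x\<in>{1..n}. \<alpha> x) + real B * \<beta>"
proof -
  have len: "length T = B" and sub: "\<And>j. j < B \<Longrightarrow> T ! j \<subseteq> {1..n}"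
    and dis: "\<And>j k. j < B \<Longrightarrow> k < B \<Longrightarrow> j \<noteq> k \<Longrightarrow> T ! j \<inter> T ! k = {}"
    using assms(4) by (auto simp: regimes_def)
  have "welfare q T = (\<Sum>j<B. util q (T ! j))"
    using len by (simp add: welfare_def sum_list_sum_nth atLeast0LessThan)
  also have "\<dots> \<le> (\<Sum>j<B. (\<Sum>x\<in>T ! j. \<alpha> x) + \<beta>)"
  proof (rule sum_mono)
    fix j assume "j \<in> {..<B}"
    then have "T ! j \<subseteq> {1..n}" using sub by simp
    moreover from this have "dual_feasible q n \<beta> \<alpha> (T ! j)"
      using assms(2) by (auto simp: dual_feasible_def)
    ultimately show "util q (T ! j) \<le> (\<Sum>x\<in>T ! j. \<alpha> x) + \<beta>"
      using assms by (intro util_le_dual) auto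
  qed
  also have "\<dots> = (\<Sum>j<B. (\<Sum>x\<in>T ! j. \<alpha> x)) + real B * \<beta>" by (simp add: sum.distrib)
  also have "(\<Sum>j<B. (\<Sum>x\<in>T ! j. \<alpha> x)) = (\<Sum>x\<in>(\<Union>j<B. T ! j). \<alpha> x)"
    using sub dis by (subst sum.UNION_disjoint) (auto intro: finite_subset)
  also have "(\<Sum>x\<in>(\<Union>j<B. T ! j). \<alpha> x) + real B * \<beta> \<le> (\<Sum>x\<in>{1..n}. \<alpha> x) + real B * \<beta>"
    using sub assms(2) by (auto simp: dual_feasible_def intro!: sum_mono2)
  finally show ?thesis .
qed

lemma exp_1_mult_power_ge_one:
  fixes z :: real
  assumes "1 \<le> K" "real (K - 1) / real K \<le> z"
  shows "1 \<le> exp 1 * z ^ (K - 1)"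
proof (cases "K = 1")
  case False
  define n where "n = K - 1"
  have n: "0 < n" "K = n + 1" using assms False by (auto simp: n_def)
  have "(1 + 1 / real n) * (real n / real (n + 1)) = 1"
    using n by (simp add: field_simps add_nonneg_eq_0_iff)
  then have "1 = (1 + 1 / real n) ^ n * (real n / real (n + 1)) ^ n"
    by (metis power_mult_distrib power_one)
  also have "\<dots> \<le> exp 1 * z ^ n"
  proof (rule mult_mono)
    show "(1 + 1 / real n) ^ n \<le> exp 1"
      using exp_ge_one_plus_x_over_n_power_n [of n 1] n by simp
    show "(real n / real (n + 1)) ^ n \<le> z ^ n"
      using assms n by (intro power_mono) auto
  qed auto
  finally show ?thesis by (simp add: n_def)
qed simp

lemma power_diff_le_mult_diff:
  fixes x z :: real
  assumes "0 \<le> z" "z \<le> x" "x \<le> 1"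
  shows "x ^ m - z ^ m \<le> real m * (x - z)"
proof (induction m)
  case (Suc m)
  have "x ^ Suc m - z ^ Suc m = x * (x ^ m - z ^ m) + z ^ m * (x - z)"
    by (simp add: algebra_simps)
  also have "\<dots> \<le> real m * (x - z) + (x - z)"
  proof (rule add_mono)
    have "0 \<le> x ^ m - z ^ m" using assms by (simp add: power_mono)
    then have "x * (x ^ m - z ^ m) \<le> x ^ m - z ^ m"
      using assms by (simp add: mult_left_le_one_le)
    then show "x * (x ^ m - z ^ m) \<le> real m * (x - z)" using Suc by linarith
    show "z ^ m * (x - z) \<le> x - z"
      using assms by (simp add: mult_left_le_one_le power_le_one)
  qed
  finally show ?case by (simp add: algebra_simps)
qed simp

lemma power_le_exp_1_mult_power:
  fixes z :: real
  assumes "1 \<le> m" "m \<le> K" "real (K - 1) / real K \<le> z" "0 \<le> z" "z \<le> 1"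
  shows "z ^ m \<le> exp 1 * z ^ K"
proof -
  have "1 \<le> exp 1 * z ^ (K - 1)" using exp_1_mult_power_ge_one assms by auto
  also have "\<dots> \<le> exp 1 * z ^ (K - m)" using assms by (simp add: power_decreasing)
  finally have "z ^ m \<le> z ^ m * (exp 1 * z ^ (K - m))"
    using assms mult_left_mono [of 1 _ "z ^ m"] by simp
  also have "\<dots> = exp 1 * z ^ K" using assms by (simp add: power_add [symmetric])
  finally show ?thesis .
qed

(* The price of an individual with probability x in a block of size K and smallest
   probability z when the budget price takes its largest value K z^K. *)
definition tangent_dual :: "real \<Rightarrow> nat \<Rightarrow> real \<Rightarrow> real" where
  "tangent_dual z K x = (exp 1 - 1) * z ^ K + exp 1 * real K * z ^ (K - 1) * (x - z)"

lemma power_minus_le_tangent_dual: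
  fixes z x :: real
  assumes "1 \<le> K" "real (K - 1) / real K \<le> z" "0 \<le> z" "z \<le> x" "x \<le> 1" "1 \<le> m"
  shows "x ^ m - real K * z ^ K / real m \<le> tangent_dual z K x"
proof -
  have "1 \<le> exp 1 * z ^ (K - 1)" using exp_1_mult_power_ge_one assms by auto
  moreover have "0 \<le> real K * (x - z)" using assms by simp
  ultimately have "real K * (x - z) * 1 \<le> real K * (x - z) * (exp 1 * z ^ (K - 1))"
    by (rule mult_left_mono)
  then have slope: "real K * (x - z) \<le> exp 1 * real K * z ^ (K - 1) * (x - z)"
    by (simp add: mult_ac)
  have "x ^ m - real K * z ^ K / real m \<le> (exp 1 - 1) * z ^ K + real K * (x - z)"
  proof (cases "m \<le> K")
    case True
    have "x ^ m \<le> z ^ m + real K * (x - z)"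
      using power_diff_le_mult_diff [of z x m] assms True
      by (smt (verit, best) mult_right_mono of_nat_mono)
    moreover have "z ^ m \<le> exp 1 * z ^ K" using power_le_exp_1_mult_power assms True by auto
    moreover have "z ^ K \<le> real K * z ^ K / real m"
      using assms True by (simp add: field_simps mult_right_mono)
    ultimately show ?thesis by (simp add: algebra_simps)
  next
    case False
    have "x ^ m \<le> x ^ K" using False assms by (intro power_decreasing) auto
    also have "\<dots> \<le> z ^ K + real K * (x - z)" using power_diff_le_mult_diff [of z x K] assms by simp
    finally have "x ^ m \<le> z ^ K + real K * (x - z)" .
    moreover have "z ^ K \<le> (exp 1 - 1) * z ^ K"
      using exp_ge_add_one_self [of 1] assms by (simp add: mult_right_mono algebra_simps)
    moreover have "0 \<le> real K * z ^ K / real m" using assms by simp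
    ultimately show ?thesis by linarith
  qed
  with slope show ?thesis by (simp add: tangent_dual_def)
qed

lemma power_plus_sum_le_prod:
  fixes f :: "'a \<Rightarrow> real"
  assumes "finite S" "\<And>x. x \<in> S \<Longrightarrow> z \<le> f x" "0 \<le> z"
  shows "z ^ card S + z ^ (card S - 1) * (\<Sum>x\<in>S. f x - z) \<le> (\<Prod>x\<in>S. f x)"
  using assms
proof (induction S rule: finite_induct)
  case (insert a S)
  let ?k = "card S" and ?D = "\<Sum>x\<in>S. f x - z"
  have IH: "z ^ ?k + z ^ (?k - 1) * ?D \<le> (\<Prod>x\<in>S. f x)" using insert by auto
  have D: "0 \<le> ?D" using insert by (auto intro: sum_nonneg)
  have fa: "z \<le> f a" "0 \<le> f a" using insert by force+
  show ?case
  proof (cases "S = {}")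
    case False
    then have zk: "z ^ ?k = z * z ^ (?k - 1)"
      using insert by (metis card_gt_0_iff power_eq_if less_numeral_extra(3))
    have "z ^ card (insert a S) + z ^ (card (insert a S) - 1) * (\<Sum>x\<in>insert a S. f x - z)
        = z * z ^ ?k + z ^ ?k * (f a - z) + z ^ ?k * ?D" using insert by (simp add: algebra_simps)
    also have "\<dots> \<le> f a * (z ^ ?k + z ^ (?k - 1) * ?D)"
    proof -
      have "0 \<le> (f a - z) * z ^ (?k - 1) * ?D" using fa D insert by simp
      then show ?thesis using zk by (simp add: algebra_simps)
    qed
    also have "\<dots> \<le> f a * (\<Prod>x\<in>S. f x)"
      using IH fa insert.prems by (intro mult_left_mono) auto
    finally show ?thesis using insert by simp
  qed simp
qed simp

lemma sum_le_exp_1_mult_util: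
  assumes "finite S" "S \<noteq> {}" "\<And>x. x \<in> S \<Longrightarrow> z \<le> q x" "0 \<le> z"
    and "real (card S - 1) / real (card S) \<le> z"
  shows "(\<Sum>x\<in>S. q x) \<le> exp 1 * util q S"
proof -
  let ?K = "card S"
  have "Max (q ` S) \<in> q ` S" using assms(1,2) by simp
  then obtain a where a: "a \<in> S" "q a = Max (q ` S)" by (metis imageE)
  then have a_max: "\<And>x. x \<in> S \<Longrightarrow> q x \<le> q a" using assms(1) by simp
  have K: "1 \<le> ?K" using assms by (simp add: Suc_le_eq card_gt_0_iff)
  have qa: "0 \<le> q a" using assms a by force
  have "(\<Prod>x\<in>S - {a}. z) \<le> (\<Prod>x\<in>S - {a}. q x)" using assms by (intro prod_mono) auto
  then have rest: "z ^ (?K - 1) \<le> (\<Prod>x\<in>S - {a}. q x)" using assms a by simp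
  have "(\<Sum>x\<in>S. q x) \<le> real ?K * q a" using sum_bounded_above [of S q "q a"] a_max by simp
  also have "\<dots> \<le> real ?K * q a * (exp 1 * z ^ (?K - 1))"
    using exp_1_mult_power_ge_one [OF K assms(5)] qa mult_left_mono [of 1 _ "real ?K * q a"]
    by simp
  also have "\<dots> \<le> real ?K * q a * (exp 1 * (\<Prod>x\<in>S - {a}. q x))"
    using rest qa by (intro mult_left_mono) auto
  also have "\<dots> = exp 1 * util q S"
    using assms a by (simp add: util_def qprod_def prod.remove algebra_simps)
  finally show ?thesis .
qed

lemma sum_tangent_dual_le_exp_1_mult_util:
  assumes "finite S" "card S = K" "\<And>x. x \<in> S \<Longrightarrow> z \<le> q x" "0 \<le> z"
  shows "(\<Sum>x\<in>S. tangent_dual z K (q x)) + real K * z ^ K \<le> exp 1 * util q S"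
proof -
  have "(\<Sum>x\<in>S. tangent_dual z K (q x))
      = real K * ((exp 1 - 1) * z ^ K) + exp 1 * real K * z ^ (K - 1) * (\<Sum>x\<in>S. q x - z)"
    using assms by (simp add: tangent_dual_def sum.distrib sum_distrib_left)
  then have "(\<Sum>x\<in>S. tangent_dual z K (q x)) + real K * z ^ K
      = exp 1 * real K * (z ^ K + z ^ (K - 1) * (\<Sum>x\<in>S. q x - z))"
    by (simp add: algebra_simps)
  also have "\<dots> \<le> exp 1 * real K * (\<Prod>x\<in>S. q x)"
    using power_plus_sum_le_prod [of S z q] assms by (simp add: mult_left_mono)
  also have "\<dots> = exp 1 * util q S" using assms by (simp add: util_def qprod_def)
  finally show ?thesis .
qed

lemma block_dual_certificate:
  assumes "finite S" "card S = K" "1 \<le> K"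
    and "\<And>x. x \<in> S \<Longrightarrow> z \<le> q x \<and> q x \<le> 1" "0 < z" "real (K - 1) / real K \<le> z"
    and "0 \<le> \<beta>" "\<beta> \<le> real K * z ^ K"
  shows "\<exists>\<psi>. dual_feasible q n \<beta> \<psi> S \<and> (\<Sum>x\<in>S. \<psi> x) + \<beta> \<le> exp 1 * util q S"
proof -
  define c where "c = real K * z ^ K"
  have "0 < c" using assms by (simp add: c_def)
  define l where "l = \<beta> / c"
  have l: "0 \<le> l" "l \<le> 1" "\<beta> = l * c" using assms \<open>0 < c\<close> by (auto simp: l_def c_def)
  define \<psi> where "\<psi> x = (1 - l) * q x + l * tangent_dual z K (q x)" for x
  have "dual_feasible q n \<beta> \<psi> S"
    unfolding dual_feasible_def
  proof (intro ballI conjI)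
    fix x assume "x \<in> S"
    then have qx: "0 \<le> q x" "q x \<le> 1" "z \<le> q x" using assms by force+
    have "0 \<le> tangent_dual z K (q x)"
      using qx assms exp_ge_add_one_self [of 1] by (simp add: tangent_dual_def)
    then show "0 \<le> \<psi> x" using l qx by (simp add: \<psi>_def)
    fix m assume "m \<in> {1..n}"
    then have "q x ^ m \<le> q x" "q x ^ m - c / real m \<le> tangent_dual z K (q x)"
      using qx assms power_minus_le_tangent_dual [of K z "q x" m] power_decreasing [of 1 m "q x"]
      by (auto simp: c_def)
    then have "(1 - l) * q x ^ m + l * (q x ^ m - c / real m) \<le> \<psi> x"
      using l by (auto simp: \<psi>_def intro!: add_mono mult_left_mono)
    then show "q x ^ m - \<beta> / real m \<le> \<psi> x" using l by (simp add: algebra_simps)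
  qed
  have "(\<Sum>x\<in>S. \<psi> x) = (1 - l) * (\<Sum>x\<in>S. q x) + l * (\<Sum>x\<in>S. tangent_dual z K (q x))"
    by (simp add: \<psi>_def sum.distrib sum_distrib_left)
  then have "(\<Sum>x\<in>S. \<psi> x) + \<beta>
      = (1 - l) * (\<Sum>x\<in>S. q x) + l * ((\<Sum>x\<in>S. tangent_dual z K (q x)) + c)"
    using l by (simp add: algebra_simps)
  also have "\<dots> \<le> (1 - l) * (exp 1 * util q S) + l * (exp 1 * util q S)"
  proof (intro add_mono mult_left_mono)
    show "(\<Sum>x\<in>S. q x) \<le> exp 1 * util q S"
      using assms by (intro sum_le_exp_1_mult_util [of S z]) force+
    show "(\<Sum>x\<in>S. tangent_dual z K (q x)) + c \<le> exp 1 * util q S"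
      unfolding c_def using assms by (intro sum_tangent_dual_le_exp_1_mult_util) force+
  qed (use l in auto)
  finally show ?thesis using \<open>dual_feasible q n \<beta> \<psi> S\<close> by (auto simp: algebra_simps)
qed

lemma mult_power_le_mult_power_upto:
  fixes z :: real
  assumes "real (K - 1) / real K \<le> z" "0 \<le> z" "z \<le> 1" "m \<le> K"
  shows "real m * z ^ m \<le> real K * z ^ K"
  using assms(4)
proof (induction m rule: inc_induct)
  case (step m)
  have "real (K - 1) \<le> z * real K" using assms step by (simp add: pos_divide_le_eq)
  then have "real K - 1 \<le> z * real K" using step by (simp add: of_nat_diff)
  moreover have "(real K - real (Suc m)) * z \<le> real K - real (Suc m)"
    by (rule mult_right_le_one_le) (use assms step in auto)
  ultimately have "real m \<le> real (Suc m) * z" by (simp add: algebra_simps)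
  then have "real m * z ^ m \<le> real (Suc m) * z * z ^ m"
    by (rule mult_right_mono) (use assms in simp)
  then have "real m * z ^ m \<le> real (Suc m) * z ^ Suc m" by (simp add: mult_ac)
  with step.IH show ?case by linarith
qed simp

lemma mult_power_le_mult_power_from:
  fixes t :: real
  assumes "0 \<le> t" "t \<le> 1" "t * (real K + 1) \<le> real K" "K \<le> m"
  shows "real m * t ^ m \<le> real K * t ^ K"
  using assms(4)
proof (induction m rule: dec_induct)
  case (step m)
  have "real (m - K) * t \<le> real (m - K)" using assms by (intro mult_right_le_one_le) auto
  then have "real (Suc m) * t \<le> real m" using assms step by (simp add: of_nat_diff algebra_simps)
  then have "real (Suc m) * t * t ^ m \<le> real m * t ^ m"
    by (rule mult_right_mono) (use assms in simp)
  then have "real (Suc m) * t ^ Suc m \<le> real m * t ^ m" by (simp add: mult_ac)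
  with step.IH show ?case by linarith
qed simp

lemma mult_power_le_mult_power:
  fixes t z :: real
  assumes "0 \<le> t" "t \<le> z" "z \<le> 1" "t * (real K + 1) \<le> real K" "real (K - 1) / real K \<le> z"
  shows "real k * t ^ k \<le> real K * z ^ K"
proof (cases "k \<le> K")
  case True
  have "real k * t ^ k \<le> real k * z ^ k" using assms by (simp add: mult_left_mono power_mono)
  also have "\<dots> \<le> real K * z ^ K" using mult_power_le_mult_power_upto assms True by auto
  finally show ?thesis .
next
  case False
  have "real k * t ^ k \<le> real K * t ^ K"
    using mult_power_le_mult_power_from [of t K k] assms False by auto
  also have "\<dots> \<le> real K * z ^ K" using assms by (simp add: mult_left_mono power_mono)
  finally show ?thesis .
qed

(* F is the first individual left out by the greedy algorithm. *)
definition budget_price :: "(nat \<Rightarrow> real) \<Rightarrow> nat \<Rightarrow> nat \<Rightarrow> real" where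
  "budget_price q n F = (if F \<le> n then Max ((\<lambda>k. real k * q F ^ k) ` {1..n}) else 0)"

lemma budget_price_nonneg:
  assumes "\<forall>i\<in>{1..n}. 0 \<le> q i \<and> q i \<le> 1" "1 \<le> F"
  shows "0 \<le> budget_price q n F"
proof (cases "F \<le> n")
  case True
  then have "real 1 * q F ^ 1 \<le> Max ((\<lambda>k. real k * q F ^ k) ` {1..n})"
    using assms by (intro Max_ge imageI) auto
  moreover have "0 \<le> q F" using assms True by auto
  ultimately show ?thesis using True by (simp add: budget_price_def)
qed (simp add: budget_price_def)

lemma budget_price_le:
  assumes "0 \<le> q F" "q F \<le> z" "z \<le> 1" "q F * (real K + 1) \<le> real K" "real (K - 1) / real K \<le> z"
    and "1 \<le> F"
  shows "budget_price q n F \<le> real K * z ^ K"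
proof -
  have "0 \<le> real K * z ^ K" using assms by simp
  then show ?thesis
    using mult_power_le_mult_power [OF assms(1-5)] assms(6)
    by (auto simp: budget_price_def Max_le_iff)
qed

lemma dual_feasible_zero_from:
  assumes "\<forall>i\<in>{1..n}. 0 \<le> q i \<and> q i \<le> 1" "\<forall>i j. 1 \<le> i \<longrightarrow> i \<le> j \<longrightarrow> j \<le> n \<longrightarrow> q j \<le> q i"
    and "1 \<le> F"
  shows "dual_feasible q n (budget_price q n F) (\<lambda>_. 0) {F..n}"
  unfolding dual_feasible_def
proof (intro ballI conjI)
  fix x m assume x: "x \<in> {F..n}" and m: "m \<in> {1..n}"
  have "real m * q x ^ m \<le> real m * q F ^ m" using assms x by (intro mult_left_mono power_mono) auto
  also have "\<dots> \<le> budget_price q n F" using x m by (auto simp: budget_price_def intro: Max_ge)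
  finally show "q x ^ m - budget_price q n F / real m \<le> 0" using m by (simp add: field_simps)
qed simp

declare grow_test.simps [simp del]

lemma util_le_util_insert_iff:
  assumes "finite t" "i \<notin> t" "0 < qprod q t"
  shows "util q t \<le> util q (insert i t) \<longleftrightarrow> real (card t) \<le> q i * (real (card t) + 1)"
  using assms by (simp add: util_def qprod_def ac_simps)

(* The bound on q (i - 1) is the test q_j >= |t| / (|t| + 1) passed by the last individual
   j = i - 1 admitted to the block t = {a..<j}; the positive product makes this test
   equivalent to u(t \<union> {j}) >= u(t). *)
definition block_invariant :: "(nat \<Rightarrow> real) \<Rightarrow> nat \<Rightarrow> nat \<Rightarrow> bool" where
  "block_invariant q a i \<longleftrightarrow> (0 < q a \<longrightarrow> a < i \<longrightarrow>
     0 < qprod q {a..<i} \<and> real (i - 1 - a) / real (i - a) \<le> q (i - 1))"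

lemma block_invariant_Suc:
  assumes "block_invariant q a i" "a \<le> i" "util q {a..<i} \<le> util q (insert i {a..<i})"
  shows "block_invariant q a (Suc i)"
  unfolding block_invariant_def
proof (intro impI)
  assume qa: "0 < q a"
  show "0 < qprod q {a..<Suc i} \<and> real (Suc i - 1 - a) / real (Suc i - a) \<le> q (Suc i - 1)"
  proof (cases "a = i")
    case False
    then have "a < i" using assms by simp
    then have P: "0 < qprod q {a..<i}" using assms qa by (simp add: block_invariant_def)
    then have grow: "real (i - a) \<le> q i * (real (i - a) + 1)"
      using assms util_le_util_insert_iff [of "{a..<i}" i q] by simp
    moreover have "0 < real (i - a)" using \<open>a < i\<close> by simp
    ultimately have "0 < q i" by (smt (verit) mult_nonpos_nonneg of_nat_0_le_iff)
    then have "0 < qprod q {a..<Suc i}"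
      using P assms by (simp add: qprod_def prod.atLeastLessThan_Suc)
    moreover have "real (i - a) / real (i - a + 1) \<le> q i"
      using grow by (simp add: divide_le_eq algebra_simps)
    ultimately show ?thesis using assms by (simp add: Suc_diff_le)
  qed (use qa in \<open>simp add: qprod_def\<close>)
qed

lemma grow_test_block:
  "grow_test q n i t = (t', i') \<Longrightarrow> t = {a..<i} \<Longrightarrow> a \<le> i \<Longrightarrow> i \<le> n + 1 \<Longrightarrow>
   block_invariant q a i \<Longrightarrow> t' = {a..<i'} \<and> i \<le> i' \<and> i' \<le> n + 1 \<and> block_invariant q a i' \<and>
   (i' \<le> n \<longrightarrow> util q (insert i' t') < util q t')"
proof (induction q n i t arbitrary: t' i' rule: grow_test.induct)
  case (1 q n i t)
  show ?case
  proof (cases "i \<le> n \<and> util q t \<le> util q (insert i t)")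
    case True
    then have "grow_test q n (Suc i) (insert i t) = (t', i')"
      using "1.prems" by (subst (asm) grow_test.simps) simp
    moreover have "insert i t = {a..<Suc i}" using "1.prems" by auto
    moreover have "block_invariant q a (Suc i)" using "1.prems" True by (intro block_invariant_Suc) auto
    ultimately have "t' = {a..<i'} \<and> Suc i \<le> i' \<and> i' \<le> n + 1 \<and> block_invariant q a i' \<and>
      (i' \<le> n \<longrightarrow> util q (insert i' t') < util q t')"
      using True "1.prems"(3) by (intro "1.IH") auto
    then show ?thesis by auto
  next
    case False
    then show ?thesis using "1.prems" by (subst (asm) grow_test.simps) (auto split: if_splits)
  qed
qed

lemma grow_test_from_empty:
  assumes "grow_test q n i {} = (t, i')" "i \<le> n" "0 \<le> q i"
  shows "t = {i..<i'}" "i < i'" "i' \<le> n + 1" "block_invariant q i i'"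
    and "i' \<le> n \<Longrightarrow> util q (insert i' t) < util q t"
proof -
  have "block_invariant q i i" by (simp add: block_invariant_def)
  then show t: "t = {i..<i'}" and "i' \<le> n + 1" "block_invariant q i i'"
    and fail: "i' \<le> n \<Longrightarrow> util q (insert i' t) < util q t"
    using grow_test_block [OF assms(1)] assms by auto
  have "i \<le> i'" using grow_test_block [OF assms(1)] assms \<open>block_invariant q i i\<close> by auto
  moreover have "i' \<noteq> i" using fail t assms by (auto simp: util_def qprod_def)
  ultimately show "i < i'" by simp
qed

lemma grow_test_ge: "grow_test q n i t = (t', i') \<Longrightarrow> i \<le> i'"
proof (induction q n i t arbitrary: t' i' rule: grow_test.induct)
  case (1 q n i t)
  show ?case
  proof (cases "i \<le> n \<and> util q t \<le> util q (insert i t)")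
    case True
    then have "grow_test q n (Suc i) (insert i t) = (t', i')"
      using "1.prems" by (subst (asm) grow_test.simps) simp
    then show ?thesis using "1.IH" True by fastforce
  next
    case False
    then show ?thesis using "1.prems" by (subst (asm) grow_test.simps) (auto split: if_splits)
  qed
qed

fun greedy_end :: "(nat \<Rightarrow> real) \<Rightarrow> nat \<Rightarrow> nat \<Rightarrow> nat \<Rightarrow> nat" where
  "greedy_end q n 0 i = i"
| "greedy_end q n (Suc B) i = greedy_end q n B (snd (grow_test q n i {}))"

lemma greedy_end_ge: "i \<le> greedy_end q n B i"
proof (induction B arbitrary: i)
  case (Suc B)
  obtain t i' where "grow_test q n i {} = (t, i')" by fastforce
  then show ?case using grow_test_ge Suc [of i'] by fastforce
qed simp

lemma grow_test_zero_start:
  assumes "\<forall>i\<in>{1..n}. 0 \<le> q i \<and> q i \<le> 1"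
    and "1 \<le> i" "i \<le> n" "grow_test q n i {} = (t, i')" "q i = 0"
  shows "n < i'" "util q t = 0"
proof -
  note block = grow_test_from_empty [OF assms(4,3)] assms(5)
  have "i \<in> t" using block by simp
  then show "util q t = 0"
    using block by (simp add: util_def qprod_def prod_zero_iff bexI [of _ i])
  show "n < i'"
  proof (rule ccontr)
    assume "\<not> n < i'"
    then have "util q (insert i' t) < 0" using block \<open>util q t = 0\<close> by simp
    moreover have "0 \<le> util q (insert i' t)"
      unfolding util_def qprod_def
      by (intro mult_nonneg_nonneg prod_nonneg) (use assms block \<open>\<not> n < i'\<close> in auto)
    ultimately show False by simp
  qed
qed

lemma greedy_block_admissible:
  assumes qb: "\<forall>i\<in>{1..n}. 0 \<le> q i \<and> q i \<le> 1"
    and mono: "\<forall>i j. 1 \<le> i \<longrightarrow> i \<le> j \<longrightarrow> j \<le> n \<longrightarrow> q j \<le> q i"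
    and "1 \<le> i" "i \<le> n" "grow_test q n i {} = (t, i')" "i' \<le> F" "0 < q i"
  defines "z \<equiv> q (i' - 1)"
  shows "0 < z" "real (card t - 1) / real (card t) \<le> z" "\<And>x. x \<in> t \<Longrightarrow> z \<le> q x \<and> q x \<le> 1"
    and "budget_price q n F \<le> real (card t) * z ^ card t"
proof -
  note block = grow_test_from_empty [OF assms(5,4) less_imp_le [OF assms(7)]]
  have P: "0 < qprod q t" using block assms(7) by (auto simp: block_invariant_def)
  show z_ge: "real (card t - 1) / real (card t) \<le> z"
    using block assms(7) by (auto simp: block_invariant_def z_def diff_diff_left)
  show z_le: "\<And>x. x \<in> t \<Longrightarrow> z \<le> q x \<and> q x \<le> 1"
    using qb mono block assms by (auto simp: z_def)
  have "i' - 1 \<in> t" using block by auto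
  have "z \<noteq> 0"
  proof
    assume "z = 0"
    then have "qprod q t = 0"
      using \<open>i' - 1 \<in> t\<close> block by (simp add: z_def qprod_def prod_zero_iff bexI [of _ "i' - 1"])
    with P show False by simp
  qed
  moreover have "i' - 1 \<in> {1..n}" using block assms by auto
  ultimately show "0 < z" using qb by (auto simp: z_def order_less_le)
  show "budget_price q n F \<le> real (card t) * z ^ card t"
  proof (cases "F \<le> n")
    case True
    then have "\<not> util q t \<le> util q (insert i' t)" using block assms by simp
    then have rejected: "q i' * (real (card t) + 1) < real (card t)"
      using util_le_util_insert_iff [of t i' q] P block by simp
    have F_le: "q F \<le> q i'" "q F \<le> z" "0 \<le> q F"
      using qb mono assms True block by (auto simp: z_def)
    have "q F * (real (card t) + 1) \<le> q i' * (real (card t) + 1)"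
      using F_le by (intro mult_right_mono) auto
    with rejected have "q F * (real (card t) + 1) \<le> real (card t)" by linarith
    with F_le show ?thesis
      using z_ge z_le [OF \<open>i' - 1 \<in> t\<close>] assms block by (intro budget_price_le) auto
  qed (use \<open>0 < z\<close> in \<open>simp add: budget_price_def\<close>)
qed

lemma greedy_block_certificate:
  assumes qb: "\<forall>i\<in>{1..n}. 0 \<le> q i \<and> q i \<le> 1"
    and mono: "\<forall>i j. 1 \<le> i \<longrightarrow> i \<le> j \<longrightarrow> j \<le> n \<longrightarrow> q j \<le> q i"
    and "1 \<le> i" "i \<le> n" "grow_test q n i {} = (t, i')" "i' \<le> F"
  shows "\<exists>\<psi>. dual_feasible q n (budget_price q n F) \<psi> t \<and>
    (\<Sum>x\<in>t. \<psi> x) + budget_price q n F \<le> exp 1 * util q t"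
proof (cases "q i = 0")
  case True
  note block = grow_test_from_empty [OF assms(5,4)] True
  have "n < i'" "util q t = 0" using grow_test_zero_start [OF qb assms(3-5) True] by auto
  then have "n < F" using assms(6) by simp
  have "q x = 0" if "x \<in> t" for x
  proof -
    have "i \<le> x" "x \<in> {1..n}" using block that assms(3) by auto
    then have "0 \<le> q x" "q x \<le> q i" using qb mono assms(3) by auto
    then show ?thesis using True by simp
  qed
  with \<open>n < F\<close> \<open>util q t = 0\<close> show ?thesis
    by (intro exI [of _ "\<lambda>_. 0"]) (simp add: dual_feasible_def budget_price_def power_0_left)
next
  case False
  then have "0 < q i" using qb assms by force
  note block = grow_test_from_empty [OF assms(5,4) less_imp_le [OF this]]
  have "finite t" "1 \<le> card t" using block by auto
  note admissible = greedy_block_admissible [OF qb mono assms(3-6) \<open>0 < q i\<close>]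
  have "0 \<le> budget_price q n F" using budget_price_nonneg [OF qb] assms block by simp
  from block_dual_certificate [OF \<open>finite t\<close> refl \<open>1 \<le> card t\<close> admissible(3,1,2) this admissible(4)]
  show ?thesis .
qed

lemma greedy_past_end:
  assumes "n < i"
  shows "welfare q (greedy_from q n B i) = 0" "greedy_end q n B i = i"
proof -
  have grow: "grow_test q n i {} = ({}, i)" using assms by (simp add: grow_test.simps)
  show "welfare q (greedy_from q n B i) = 0"
    by (induction B) (simp_all add: grow welfare_def util_def)
  show "greedy_end q n B i = i" by (induction B) (simp_all add: grow)
qed

lemma greedy_dual_certificate:
  assumes qb: "\<forall>i\<in>{1..n}. 0 \<le> q i \<and> q i \<le> 1"
    and mono: "\<forall>i j. 1 \<le> i \<longrightarrow> i \<le> j \<longrightarrow> j \<le> n \<longrightarrow> q j \<le> q i"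
    and "1 \<le> i" "i \<le> n + 1"
  shows "\<exists>\<alpha>. dual_feasible q n (budget_price q n (greedy_end q n B i)) \<alpha> {i..n} \<and>
    (\<Sum>x\<in>{i..n}. \<alpha> x) + real B * budget_price q n (greedy_end q n B i)
      \<le> exp 1 * welfare q (greedy_from q n B i)"
  using assms(3,4)
proof (induction B arbitrary: i)
  case 0
  then show ?case
    using dual_feasible_zero_from [OF qb mono] by (intro exI [of _ "\<lambda>_. 0"]) (simp add: welfare_def)
next
  case (Suc B)
  show ?case
  proof (cases "i \<le> n")
    case False
    then show ?thesis using greedy_past_end [of n i q "Suc B"]
      by (intro exI [of _ "\<lambda>_. 0"]) (simp add: budget_price_def dual_feasible_def)
  next
    case True
    obtain t i' where grow: "grow_test q n i {} = (t, i')" by fastforce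
    define \<beta> where "\<beta> = budget_price q n (greedy_end q n B i')"
    have "0 \<le> q i" using qb Suc.prems True by auto
    note block = grow_test_from_empty [OF grow True this]
    have "1 \<le> i'" "i' \<le> n + 1" using Suc.prems block by auto
    then obtain \<alpha> where \<alpha>: "dual_feasible q n \<beta> \<alpha> {i'..n}"
      and \<alpha>_sum: "(\<Sum>x\<in>{i'..n}. \<alpha> x) + real B * \<beta> \<le> exp 1 * welfare q (greedy_from q n B i')"
      using Suc.IH unfolding \<beta>_def by blast
    obtain \<psi> where \<psi>: "dual_feasible q n \<beta> \<psi> t"
      and \<psi>_sum: "(\<Sum>x\<in>t. \<psi> x) + \<beta> \<le> exp 1 * util q t"
      using greedy_block_certificate [OF qb mono _ True grow greedy_end_ge] Suc.prems
      unfolding \<beta>_def by blast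
    define \<gamma> where "\<gamma> x = (if x < i' then \<psi> x else \<alpha> x)" for x
    have split: "{i..n} = t \<union> {i'..n}" "t \<inter> {i'..n} = {}" using block \<open>i' \<le> n + 1\<close> by auto
    have "dual_feasible q n \<beta> \<gamma> {i..n}"
      unfolding split(1) using \<alpha> \<psi> block by (auto simp: dual_feasible_def \<gamma>_def)
    moreover have "(\<Sum>x\<in>{i..n}. \<gamma> x) = (\<Sum>x\<in>t. \<psi> x) + (\<Sum>x\<in>{i'..n}. \<alpha> x)"
      unfolding split(1) using split(2) block by (simp add: sum.union_disjoint \<gamma>_def)
    moreover have "greedy_end q n (Suc B) i = greedy_end q n B i'"
      and "welfare q (greedy_from q n (Suc B) i) = util q t + welfare q (greedy_from q n B i')"
      using grow by (simp_all add: welfare_def)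
    ultimately show ?thesis
      using \<alpha>_sum \<psi>_sum unfolding \<beta>_def by (intro exI [of _ \<gamma>]) (simp add: algebra_simps)
  qed
qed

theorem mainTheorem13:
  fixes q :: "nat \<Rightarrow> real" and n B :: nat
  assumes "\<forall>i\<in>{1..n}. 0 \<le> q i \<and> q i \<le> 1"
    and "\<forall>i j. 1 \<le> i \<longrightarrow> i \<le> j \<longrightarrow> j \<le> n \<longrightarrow> q j \<le> q i"
  shows "\<forall>T'\<in>regimes n B. welfare q T' \<le> exp 1 * welfare q (var_greedy q n B)"
proof
  fix T' assume T': "T' \<in> regimes n B"
  define \<beta> where "\<beta> = budget_price q n (greedy_end q n B 1)"
  obtain \<alpha> where \<alpha>: "dual_feasible q n \<beta> \<alpha> {1..n}"
    and dual_le: "(\<Sum>x\<in>{1..n}. \<alpha> x) + real B * \<beta> \<le> exp 1 * welfare q (var_greedy q n B)"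
    using greedy_dual_certificate [OF assms, of 1 B] unfolding \<beta>_def var_greedy_def by auto
  have "0 \<le> \<beta>"
    unfolding \<beta>_def using assms(1) greedy_end_ge [of 1] by (rule budget_price_nonneg)
  with welfare_le_dual [OF assms(1) \<alpha> _ T'] dual_le
  show "welfare q T' \<le> exp 1 * welfare q (var_greedy q n B)" by linarith
qed

end
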